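(* Let $n=|\mathcal{O}|\ge 2$ be the number of candidate operations, let $\delta\ge 0$, and let $\beta=(\beta_1,\dots,\beta_n)\in(0,\infty)^n$ be a Dirichlet concentration parameter satisfying $\|\beta-\mathbf{1}\|_2\le\delta$, where $\mathbf{1}=(1,\dots,1)$. Define $\mu\in\mathbb{R}^n$ and the diagonal matrix $\Sigma=\mathrm{diag}(\Sigma_1,\dots,\Sigma_n)$ by $$\mu_o=\log\beta_o-\frac{1}{n}\sum_{o'=1}^n\log\beta_{o'},\qquad \Sigma_o=\frac{1}{\beta_o}\Big(1-\frac{2}{n}\Big)+\frac{1}{n^2}\sum_{o'=1}^n\frac{1}{\beta_{o'}},\qquad o=1,\dots,n.$$ Let $w^*$ be fixed network weights, let $\mathcal{L}_{val}(w^*,\cdot)$ be the validation loss as a function of the operation mixing weight, and let $\tilde{\mathcal{L}}_{val}(w^*,\nu)=\mathcal{L}_{val}(w^*,\mathrm{Softmax}(\nu))$ for $\nu\in\mathbb{R}^n$, assumed twice differentiable at $\mu$. If $\nabla_\mu^2\tilde{\mathcal{L}}_{val}(w^*,\mu)$ is positive semi-definite, then the (Laplace-approximated, second-order) expected validation loss satisfies $$E_{\theta\sim \mathrm{Dir}(\beta)}\big[\mathcal{L}_{val}(w^*,\theta)\big]\;\approx\;\tilde{\mathcal{L}}_{val}(w^*,\mu)+\tfrac12\,\mathrm{tr}\big(\Sigma\,\nabla_\mu^2\tilde{\mathcal{L}}_{val}(w^*,\mu)\big)\;\ge\;\tilde{\mathcal{L}}_{val}(w^*,\mu)+\frac12\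Big(\frac{1}{1+\delta}\Big(1-\frac{2}{n}\Big)+\frac{1}{n}\cdot\frac{1}{1+\delta}\Big)\mathrm{tr}\big(\nabla_\mu^2\tilde{\mathcal{L}}_{val}(w^*,\mu)\big).$$
   Context: Setting: differentiable neural architecture search where, on each edge of a cell, the operation mixing weight $\theta$ lies on the probability simplex over the candidate operation set $\mathcal{O}$ and is modeled as $\theta\sim\mathrm{Dir}(\beta)$. The symbol $\approx$ refers to the paper's approximation: the Dirichlet distribution is replaced by its Laplace approximation in the softmax basis, i.e. $\theta=\mathrm{Softmax}(\mu+\epsilon)$ with $\epsilon\sim\mathcal{N}(0,\Sigma)$ and $\mu,\Sigma$ as defined in the claim, and $\tilde{\mathcal{L}}_{val}(w^*,\mu+\epsilon)$ is replaced by its second-order Taylor expansion around $\mu$; the rigorous content is the inequality between the middle and right-hand expressions. The paper writes the conclusion as an approximate lower bound "$E_{q(\theta|\beta)}(\mathcal{L}_{val}(w,\theta))\gtrsim\cdots$". *)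

theory Defs
  imports "HOL-Analysis.Analysis"
begin

definition softmax :: "real^'n::finite \<Rightarrow> real^'n" where
  "softmax \<nu> = (\<chi> k. exp (\<nu> $ k) / (\<Sum>k'\<in>UNIV. exp (\<nu> $ k')))"

definition laplace_mu :: "real^'n::finite \<Rightarrow> real^'n" where
  "laplace_mu \<beta> = (\<chi> k. ln (\<beta> $ k) - (1 / real CARD('n)) * (\<Sum>k'\<in>UNIV. ln (\<beta> $ k')))"

definition laplace_sigma :: "real^'n::finite \<Rightarrow> real^'n" where
  "laplace_sigma \<beta> = (\<chi> k. (1 / \<beta> $ k) * (1 - 2 / real CARD('n))
      + (1 / (real CARD('n))^2) * (\<Sum>k'\<in>UNIV. 1 / \<beta> $ k'))"

definition diag_mat :: "real^'n::finite \<Rightarrow> real^'n^'n" where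
  "diag_mat d = (\<chi> i j. if i = j then d $ i else 0)"

definition has_hessian_at :: "(real^'n::finite \<Rightarrow> real) \<Rightarrow> real^'n^'n \<Rightarrow> real^'n \<Rightarrow> bool" where
  "has_hessian_at f H x \<longleftrightarrow>
     (\<exists>g e. e > 0 \<and> (\<forall>y\<in>ball x e. (f has_derivative (\<lambda>h. g y \<bullet> h)) (at y))
        \<and> (g has_derivative (\<lambda>h. H *v h)) (at x))"

definition psd :: "real^'n::finite^'n \<Rightarrow> bool" where
  "psd H \<longleftrightarrow> (\<forall>v. 0 \<le> v \<bullet> (H *v v))"

end

theory Submission
  imports Defs
begin

text \<open>Each diagonal entry of \<open>diag_mat (laplace_sigma \<beta>)\<close> is at least the constant
  \<open>c = (1 - 2/n)/(1 + \<delta>) + 1/(n (1 + \<delta>))\<close>, because every \<open>\<beta> $ k\<close> lies within \<open>\<delta>\<close> of \<open>1\<close>.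
  Since \<open>trace (diag_mat d ** H) = (\<Sum>k. d $ k * H $ k $ k)\<close> and the diagonal entries of a
  positive semi-definite \<open>H\<close> are nonnegative, this trace is at least \<open>c * trace H\<close>.\<close>

lemma psd_diag_nonneg:
  fixes H :: "real^'n::finite^'n"
  assumes "psd H"
  shows "0 \<le> H $ k $ k"
proof -
  have "0 \<le> axis k 1 \<bullet> (H *v axis k 1)"
    using assms unfolding psd_def by blast
  also have "axis k 1 \<bullet> (H *v axis k 1) = (H *v axis k 1) $ k"
    by (simp add: inner_axis')
  also have "\<dots> = H $ k $ k"
    by (simp add: matrix_vector_mult_def axis_def if_distrib cong: if_cong)
  finally show ?thesis .
qed

lemma trace_diag_mat_mult:
  fixes d :: "real^'n::finite" and H :: "real^'n^'n"
  shows "trace (diag_mat d ** H) = (\<Sum>k\<in>UNIV. d $ k * H $ k $ k)"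
  by (simp add: trace_def matrix_matrix_mult_def diag_mat_def
      if_distrib[where f="\<lambda>x. x * _"] sum.delta cong: if_cong)

lemma trace_diag_mat_mult_lower_bound:
  fixes d :: "real^'n::finite" and H :: "real^'n^'n"
  assumes "psd H" and "\<And>k. c \<le> d $ k"
  shows "c * trace H \<le> trace (diag_mat d ** H)"
proof -
  have "c * trace H = (\<Sum>k\<in>UNIV. c * H $ k $ k)"
    by (simp add: trace_def sum_distrib_left)
  also have "\<dots> \<le> (\<Sum>k\<in>UNIV. d $ k * H $ k $ k)"
    by (intro sum_mono mult_right_mono assms(2) psd_diag_nonneg[OF assms(1)])
  finally show ?thesis
    by (simp add: trace_diag_mat_mult)
qed

lemma component_le_const_plus_norm_diff:
  fixes x :: "real^'n::finite"
  shows "x $ k \<le> c + norm (x - (\<chi> i. c))"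
  using component_le_norm_cart[of "x - (\<chi> i. c)" k] by simp

lemma laplace_sigma_lower_bound:
  fixes \<beta> :: "real^'n::finite"
  assumes "CARD('n) \<ge> 2" and "\<And>k. 0 < \<beta> $ k" and "\<And>k. \<beta> $ k \<le> b"
  shows "(1 / b) * (1 - 2 / real CARD('n)) + (1 / real CARD('n)) * (1 / b)
           \<le> laplace_sigma \<beta> $ k"
proof -
  let ?n = "real CARD('n)"
  have inv_le: "1 / b \<le> 1 / \<beta> $ j" for j
    using assms(2,3) by (simp add: frac_le)
  have "(1 / b) * (1 - 2 / ?n) \<le> (1 / \<beta> $ k) * (1 - 2 / ?n)"
    using assms(1) by (intro mult_right_mono inv_le) (simp add: field_simps)
  moreover have "(1 / ?n) * (1 / b) \<le> (1 / ?n^2) * (\<Sum>j\<in>UNIV. 1 / \<beta> $ j)"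
  proof -
    have "(1 / ?n) * (1 / b) = (1 / ?n^2) * (\<Sum>j\<in>(UNIV::'n set). 1 / b)"
      by (simp add: power2_eq_square)
    also have "\<dots> \<le> (1 / ?n^2) * (\<Sum>j\<in>UNIV. 1 / \<beta> $ j)"
      by (intro mult_left_mono sum_mono inv_le) simp
    finally show ?thesis .
  qed
  ultimately show ?thesis
    unfolding laplace_sigma_def by simp
qed

theorem proposition1:
  fixes \<beta> :: "real^'n::finite" and \<delta> :: real
    and L :: "real^'n \<Rightarrow> real" and H :: "real^'n^'n"
  assumes "CARD('n) \<ge> 2"
    and "\<delta> \<ge> 0"
    and "\<forall>k. \<beta> $ k > 0"
    and "norm (\<beta> - (\<chi> k. 1)) \<le> \<delta>"
    and "has_hessian_at (\<lambda>\<nu>. L (softmax \<nu>)) H (laplace_mu \<beta>)"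
    and "psd H"
  shows "L (softmax (laplace_mu \<beta>)) + 1/2 * trace (diag_mat (laplace_sigma \<beta>) ** H)
    \<ge> L (softmax (laplace_mu \<beta>))
       + 1/2 * ((1 / (1 + \<delta>)) * (1 - 2 / real CARD('n)) + (1 / real CARD('n)) * (1 / (1 + \<delta>)))
             * trace H"
proof -
  have "\<beta> $ k \<le> 1 + \<delta>" for k
    using component_le_const_plus_norm_diff[of \<beta> k 1] assms(4) by linarith
  then have "(1 / (1 + \<delta>)) * (1 - 2 / real CARD('n)) + (1 / real CARD('n)) * (1 / (1 + \<delta>))
               \<le> laplace_sigma \<beta> $ k" for k
    using laplace_sigma_lower_bound assms(1,3) by blast
  then show ?thesis
    using trace_diag_mat_mult_lower_bound[OF assms(6)] by (simp add: mult.assoc)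
qed

end
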